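(* Let $m>n\ge1$ be coprime integers. Define $$\mathcal{A}_{\frac{m}{n}}(q)=q\,\mathcal{N}_{\frac{m}{n}}(q)\mathcal{N}_{\frac{n}{m}}(q)+\mathcal{D}_{\frac{m}{n}}(q)\mathcal{D}_{\frac{n}{m}}(q),$$ $$\mathcal{B}_{\frac{m}{n}}(q)=\mathcal{N}_{\frac{m}{n}}(q)\mathcal{D}_{\frac{n}{m}}(q)-\mathcal{D}_{\frac{m}{n}}(q)\mathcal{N}_{\frac{n}{m}}(q),$$ $$\mathcal{C}_{\frac{m}{n}}(q)=q\,\mathcal{N}_{\frac{m}{n}}(q)^2+\mathcal{D}_{\frac{m}{n}}(q)^2.$$ Then $$\mathcal{A}_{\frac{m}{n}}(q)^2+q\,\mathcal{B}_{\frac{m}{n}}(q)^2=\mathcal{C}_{\frac{m}{n}}(q)\,\mathcal{C}^*_{\frac{m}{n}}(q),$$ where $\mathcal{C}^*_{\frac{m}{n}}(q):=q^{\deg(\mathcal{C}_{\frac{m}{n}})}\,\mathcal{C}_{\frac{m}{n}}(q^{-1})$.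
   Context: The $q$-deformed rationals: $x\mapsto[x]_q$ is the unique map from $\mathbb{Q}\cup\{\infty\}$ to $\mathbb{Q}(q)\cup\{\infty\}$ satisfying $[0]_q=0$, $[x+1]_q=q[x]_q+1$ and $[-1/x]_q=-1/(q[x]_q)$. For positive rational $x$, $\mathcal{N}_x,\mathcal{D}_x\in\mathbb{Z}[q]$ are the numerator and denominator of $[x]_q$: the polynomials with no common divisor in $\mathbb{Z}[q]$ other than $\pm1$ and with positive leading coefficients such that $[x]_q=\mathcal{N}_x/\mathcal{D}_x$. *)

theory Defs
  imports "HOL-Computational_Algebra.Polynomial" "HOL-Computational_Algebra.Fraction_Field"
begin

text \<open>Extended rationals Q \<union> {\<infinity>} as rat option (None = \<infinity>), and
  extended rational functions Q(q) \<union> {\<infinity>} as (int poly fract) option,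
  where int poly fract is the fraction field of Z[q], i.e. Q(q).\<close>

definition ext_T :: "rat option \<Rightarrow> rat option" where
  "ext_T x = (case x of None \<Rightarrow> None | Some r \<Rightarrow> Some (r + 1))"

definition ext_S :: "rat option \<Rightarrow> rat option" where
  "ext_S x = (case x of None \<Rightarrow> Some 0
      | Some r \<Rightarrow> (if r = 0 then None else Some (- 1 / r)))"

definition qvar :: "int poly fract" where
  "qvar = Fract [:0, 1:] 1"

definition qext_T :: "int poly fract option \<Rightarrow> int poly fract option" where
  "qext_T y = (case y of None \<Rightarrow> None | Some f \<Rightarrow> Some (qvar * f + 1))"

definition qext_S :: "int poly fract option \<Rightarrow> int poly fract option" where
  "qext_S y = (case y of None \<Rightarrow> Some 0
      | Some f \<Rightarrow> (if f = 0 then None else Some (- 1 / (qvar * f))))"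

definition qrat :: "rat option \<Rightarrow> int poly fract option" where
  "qrat = (THE f. f (Some 0) = Some 0 \<and> (\<forall>x. f (ext_T x) = qext_T (f x))
                  \<and> (\<forall>x. f (ext_S x) = qext_S (f x)))"

definition qND :: "rat \<Rightarrow> int poly \<times> int poly" where
  "qND x = (THE (N, D). D \<noteq> 0 \<and> qrat (Some x) = Some (Fract N D) \<and> coprime N D
              \<and> lead_coeff N > 0 \<and> lead_coeff D > 0)"

definition qN :: "rat \<Rightarrow> int poly" where "qN x = fst (qND x)"
definition qD :: "rat \<Rightarrow> int poly" where "qD x = snd (qND x)"

end

theory Submission
  imports Defs "HOL-Computational_Algebra.Polynomial_Factorial"
begin

text \<open>Write [x]_q = N/D and [1/x]_q = N'/D' in lowest terms. Generating x > 0 from 1 by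
  x \<mapsto> x + 1 and x \<mapsto> 1/x (the Euclidean algorithm), one sees inductively that D(0) = 1,
  deg D \<le> deg N =: c, and that [1/x]_q arises from [x]_q by substituting 1/q and inverting:
  N' = q^c D(1/q) and D' = q^c N(1/q). Hence q N'^2 + D'^2 = q^(2c+1) C(1/q) is the reciprocal
  of C = q N^2 + D^2, which has degree 2c + 1, and the claim becomes the two-square identity
  (q N N' + D D')^2 + q (N D' - D N')^2 = (q N^2 + D^2) (q N'^2 + D'^2).\<close>

section \<open>The q-deformation as a recursive function\<close>

lemma qvar_neq_0: "qvar \<noteq> 0"
  by (simp add: qvar_def Zero_fract_def eq_fract)

definition qext_T_inv :: "int poly fract option \<Rightarrow> int poly fract option" where
  "qext_T_inv y = map_option (\<lambda>f. (f - 1) / qvar) y"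

lemma qext_T_qext_T_inv [simp]: "qext_T (qext_T_inv y) = y"
  by (cases y) (simp_all add: qext_T_def qext_T_inv_def qvar_neq_0)

lemma qext_T_inv_qext_T [simp]: "qext_T_inv (qext_T y) = y"
  by (cases y) (simp_all add: qext_T_def qext_T_inv_def qvar_neq_0)

lemma qext_S_qext_S [simp]: "qext_S (qext_S y) = y"
  by (cases y) (simp_all add: qext_S_def qvar_neq_0)

lemma qext_braid: "qext_T_inv (qext_S (qext_T_inv (qext_S y))) = qext_S (qext_T y)"
proof (cases y)
  case (Some f)
  have "qvar * (qvar * f + 1) \<noteq> 0" if "qvar * f + 1 \<noteq> 0"
    using that qvar_neq_0 by simp
  then show ?thesis
    using Some qvar_neq_0
    by (auto simp: qext_S_def qext_T_def qext_T_inv_def field_simps add_eq_0_iff)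
qed (simp add: qext_S_def qext_T_def qext_T_inv_def qvar_neq_0)

lemma snd_quotient_of_add_1: "snd (quotient_of (r + 1)) = snd (quotient_of r)"
proof -
  obtain a b where ab: "quotient_of r = (a, b)" by fastforce
  have "gcd (a + b) b = 1" using quotient_of_coprime[OF ab] by simp
  then show ?thesis using quotient_of_denom_pos[OF ab] ab
    by (simp add: rat_plus_code Rat.normalize_def)
qed

lemma snd_quotient_of_minus_inverse_less:
  assumes "0 < r" "r < 1"
  shows "snd (quotient_of (- 1 / r)) < snd (quotient_of r)"
proof -
  obtain a b where ab: "quotient_of r = (a, b)" by fastforce
  have "0 < b" using quotient_of_denom_pos[OF ab] .
  moreover have "r = of_int a / of_int b" using quotient_of_div[OF ab] .
  ultimately have "0 < a" "a < b" using assms by (simp_all add: zero_less_divide_iff divide_less_eq_1)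
  then show ?thesis using ab by (simp add: divide_inverse rat_uminus_code rat_inverse_code)
qed

text \<open>Translations by 1 keep the denominator and move \<open>r\<close> towards \<open>[0, 1)\<close>; on \<open>(0, 1)\<close>,
  \<open>r \<mapsto> -1/r\<close> lowers the denominator. Hence the recursion terminates.\<close>

function qdeform :: "rat \<Rightarrow> int poly fract option" where
  "qdeform r =
    (if r = 0 then Some 0
     else if 1 \<le> r then qext_T (qdeform (r - 1))
     else if r < 0 then qext_T_inv (qdeform (r + 1))
     else qext_S (qdeform (- 1 / r)))"
  by auto
termination
proof (relation "measures [\<lambda>r. nat (snd (quotient_of r)), \<lambda>r. nat \<bar>\<lfloor>r\<rfloor>\<bar>]", goal_cases)
  case (2 r)
  then show ?case using snd_quotient_of_add_1[of "r - 1"] by simp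
next
  case (3 r)
  then have "nat \<bar>\<lfloor>r + 1\<rfloor>\<bar> < nat \<bar>\<lfloor>r\<rfloor>\<bar>" by linarith
  then show ?case using snd_quotient_of_add_1[of r] by simp
next
  case (4 r)
  then show ?case using snd_quotient_of_minus_inverse_less[of r] quotient_of_denom_pos'[of r] by simp
qed simp

declare qdeform.simps [simp del]

lemma qdeform_0: "qdeform 0 = Some 0"
  by (simp add: qdeform.simps)

lemma qdeform_plus_1: "qdeform (r + 1) = qext_T (qdeform r)"
proof (cases "r < 0")
  case True
  then show ?thesis by (subst (2) qdeform.simps) simp
qed (subst qdeform.simps, simp)

lemma qdeform_minus_1: "qdeform (r - 1) = qext_T_inv (qdeform r)"
  using qdeform_plus_1[of "r - 1"] by simp

lemma qdeform_minus_inverse_pos: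
  assumes "0 < r" "r < of_nat k"
  shows "qdeform (- 1 / r) = qext_S (qdeform r)"
  using assms
proof (induction k arbitrary: r)
  case (Suc k)
  consider "r < 1" | "r = 1" | "1 < r" by fastforce
  then show ?case
  proof cases
    case 1
    then show ?thesis using Suc.prems by (subst (2) qdeform.simps) simp
  next
    case 2
    then show ?thesis
      using qdeform_minus_1[of 0] qdeform_plus_1[of 0]
      by (simp add: qdeform_0 qext_S_def qext_T_def qext_T_inv_def)
  next
    case 3
    txt \<open>On the rational side \<open>-1/r = T\<inverse>(S(T\<inverse>(S(r - 1))))\<close>; the braid relation
      turns this into the claim.\<close>
    define s where "s = (r - 1) / r"
    have s: "0 < s" "s < 1" "- 1 / r = s - 1" "- 1 / s = - 1 / (r - 1) - 1"
      using 3 by (simp_all add: s_def field_simps)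
    have IH: "qdeform (- 1 / (r - 1)) = qext_S (qdeform (r - 1))"
      using Suc 3 by simp
    have "qdeform (- 1 / r) = qext_T_inv (qext_S (qdeform (- 1 / s)))"
      using s qdeform_minus_1[of s] by (subst (asm) (2) qdeform.simps) simp
    also have "\<dots> = qext_T_inv (qext_S (qext_T_inv (qext_S (qdeform (r - 1)))))"
      using s(4) qdeform_minus_1 IH by simp
    also have "\<dots> = qext_S (qdeform r)"
      using qext_braid qdeform_plus_1[of "r - 1"] by simp
    finally show ?thesis .
  qed
qed simp

lemma qdeform_minus_inverse:
  assumes "r \<noteq> 0"
  shows "qdeform (- 1 / r) = qext_S (qdeform r)"
proof (cases "0 < r")
  case True
  then show ?thesis using qdeform_minus_inverse_pos reals_Archimedean2 by blast
next
  case False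
  then have "0 < - 1 / r" using assms by (simp add: field_simps)
  then have "qdeform r = qext_S (qdeform (- 1 / r))"
    using qdeform_minus_inverse_pos[of "- 1 / r"] reals_Archimedean2 by fastforce
  then show ?thesis by simp
qed

lemma qdeform_div_plus_1:
  assumes "y + 1 \<noteq> 0"
  shows "qdeform (y / (y + 1)) = qext_T (qext_S (qext_T (qdeform y)))"
proof -
  have "y / (y + 1) = - 1 / (y + 1) + 1" using assms by (simp add: field_simps)
  then have "qdeform (y / (y + 1)) = qext_T (qdeform (- 1 / (y + 1)))"
    by (simp only: qdeform_plus_1)
  also have "\<dots> = qext_T (qext_S (qext_T (qdeform y)))"
    using qdeform_minus_inverse[OF assms] qdeform_plus_1[of y] by simp
  finally show ?thesis .
qed

lemma qdeform_unique:
  assumes "f (Some 0) = Some 0" "\<forall>x. f (ext_T x) = qext_T (f x)" "\<forall>x. f (ext_S x) = qext_S (f x)"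
  shows "f = (\<lambda>x. Option.bind x qdeform)"
proof
  have f_T: "f (Some (r + 1)) = qext_T (f (Some r))" for r
    using assms(2) by (metis ext_T_def option.simps(5))
  have f_S: "f (Some r) = qext_S (f (Some (- 1 / r)))" if "r \<noteq> 0" for r
  proof -
    have "ext_S (Some (- 1 / r)) = Some r" using that by (simp add: ext_S_def)
    then show ?thesis using assms(3) by metis
  qed
  have "f (Some r) = qdeform r" for r
  proof (induction r rule: qdeform.induct)
    case (1 r)
    consider "r = 0" | "1 \<le> r" | "r < 0" | "r \<noteq> 0" "\<not> 1 \<le> r" "\<not> r < 0" by fastforce
    then show ?case
    proof cases
      case 1
      then show ?thesis using assms(1) by (simp add: qdeform_0)
    next
      case 2
      then have "f (Some r) = qext_T (qdeform (r - 1))" using "1.IH"(1) f_T[of "r - 1"] by simp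
      then show ?thesis using 2 by (subst qdeform.simps) simp
    next
      case 3
      then have "f (Some (r + 1)) = qdeform (r + 1)" using "1.IH"(2) by simp
      then have "f (Some r) = qext_T_inv (qdeform (r + 1))" using f_T[of r] by (metis qext_T_inv_qext_T)
      then show ?thesis using 3 by (subst qdeform.simps) simp
    next
      case 4
      then have "f (Some r) = qext_S (qdeform (- 1 / r))" using "1.IH"(3) f_S[of r] by simp
      then show ?thesis using 4 by (subst qdeform.simps) simp
    qed
  qed
  moreover have "f None = None"
  proof -
    have "ext_S (Some 0) = None" by (simp add: ext_S_def)
    then have "f None = qext_S (f (Some 0))" using assms(3) by metis
    then show ?thesis using assms(1) by (simp add: qext_S_def)
  qed
  ultimately show "f x = Option.bind x qdeform" for x by (cases x) simp_all
qed

lemma qrat_eq_qdeform: "qrat = (\<lambda>x. Option.bind x qdeform)"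
  unfolding qrat_def
proof (rule the_equality)
  show "Option.bind (Some 0) qdeform = Some 0
    \<and> (\<forall>x. Option.bind (ext_T x) qdeform = qext_T (Option.bind x qdeform))
    \<and> (\<forall>x. Option.bind (ext_S x) qdeform = qext_S (Option.bind x qdeform))"
    using qdeform_minus_inverse
    by (auto simp: ext_T_def qext_T_def ext_S_def qext_S_def qdeform_0 qdeform_plus_1 split: option.split)
qed (use qdeform_unique in blast)

lemma qrat_Some: "qrat (Some r) = qdeform r"
  by (simp add: qrat_eq_qdeform)

section \<open>Reflection of polynomials in a given degree\<close>

text \<open>For \<open>degree p \<le> k\<close>, \<open>reflect_deg k p\<close> is \<open>q^k p(1/q)\<close>.\<close>

definition reflect_deg :: "nat \<Rightarrow> 'a :: comm_semiring_1 poly \<Rightarrow> 'a poly" where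
  "reflect_deg k p = monom 1 (k - degree p) * reflect_poly p"

lemma reflect_deg_degree: "reflect_deg (degree p) p = reflect_poly p"
  by (simp add: reflect_deg_def)

lemma coeff_reflect_deg:
  assumes "degree p \<le> k"
  shows "coeff (reflect_deg k p) n = (if n \<le> k then coeff p (k - n) else 0)"
  using assms by (auto simp: reflect_deg_def coeff_monom_mult coeff_reflect_poly coeff_eq_0)

lemma degree_reflect_deg_le: "degree p \<le> k \<Longrightarrow> degree (reflect_deg k p) \<le> k"
  by (rule degree_le) (simp add: coeff_reflect_deg)

lemma degree_reflect_deg:
  "degree p \<le> k \<Longrightarrow> coeff p 0 \<noteq> 0 \<Longrightarrow> degree (reflect_deg k p) = k"
  by (metis coeff_reflect_deg degree_reflect_deg_le diff_self_eq_0 le_antisym le_degree order_refl)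

lemma reflect_deg_reflect_deg: "degree p \<le> k \<Longrightarrow> reflect_deg k (reflect_deg k p) = p"
  by (rule poly_eqI) (auto simp: coeff_reflect_deg degree_reflect_deg_le coeff_eq_0)

lemma reflect_deg_add:
  "degree p \<le> k \<Longrightarrow> degree q \<le> k \<Longrightarrow> reflect_deg k (p + q) = reflect_deg k p + reflect_deg k q"
  by (rule poly_eqI) (simp add: coeff_reflect_deg degree_add_le)

lemma reflect_deg_mult:
  fixes p q :: "'a :: idom poly"
  assumes "degree p \<le> a" "degree q \<le> b"
  shows "reflect_deg (a + b) (p * q) = reflect_deg a p * reflect_deg b q"
proof (cases "p = 0 \<or> q = 0")
  case False
  then have "a + b - degree (p * q) = (a - degree p) + (b - degree q)"
    using assms by (simp add: degree_mult_eq)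
  then show ?thesis by (simp add: reflect_deg_def reflect_poly_mult mult_monom mult_ac)
qed (auto simp: reflect_deg_def)

lemma reflect_deg_Suc_pCons_0:
  "degree p \<le> k \<Longrightarrow> reflect_deg (Suc k) (pCons 0 p) = reflect_deg k p"
  by (rule poly_eqI) (auto simp: coeff_reflect_deg coeff_pCons Suc_diff_le split: nat.split)

lemma reflect_deg_Suc:
  "degree p \<le> k \<Longrightarrow> reflect_deg (Suc k) p = pCons 0 (reflect_deg k p)"
  by (rule poly_eqI) (auto simp: coeff_reflect_deg coeff_pCons coeff_eq_0 split: nat.split)

lemma reflect_poly_sum_squares:
  fixes N D :: "'a :: idom poly"
  assumes "N \<noteq> 0" "degree D \<le> degree N"
  shows "reflect_poly ([:0, 1:] * N^2 + D^2)
    = [:0, 1:] * (reflect_deg (degree N) D)^2 + (reflect_deg (degree N) N)^2"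
proof -
  let ?c = "degree N"
  have NN: "degree (N * N) = ?c + ?c"
    using assms(1) by (simp add: degree_mult_eq)
  have DD: "degree (D * D) \<le> ?c + ?c"
    using assms(2) by (meson add_mono degree_mult_le order_trans)
  have C: "[:0, 1:] * N^2 + D^2 = pCons 0 (N * N) + D * D"
    by (simp add: power2_eq_square)
  have "degree (pCons 0 (N * N) + D * D) = Suc (?c + ?c)"
    using NN DD assms(1) by (subst degree_add_eq_left) auto
  then have "reflect_poly ([:0, 1:] * N^2 + D^2)
      = reflect_deg (Suc (?c + ?c)) (pCons 0 (N * N) + D * D)"
    by (metis C reflect_deg_degree)
  also have "\<dots> = reflect_deg (?c + ?c) (N * N) + pCons 0 (reflect_deg (?c + ?c) (D * D))"
    using NN DD by (simp add: reflect_deg_add reflect_deg_Suc reflect_deg_Suc_pCons_0)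
  also have "\<dots> = [:0, 1:] * (reflect_deg ?c D)^2 + (reflect_deg ?c N)^2"
    using assms(2) by (simp add: reflect_deg_mult power2_eq_square)
  finally show ?thesis .
qed

section \<open>Reduced q-fractions\<close>

lemma coprime_pCons_0_left:
  fixes N D :: "'a :: {factorial_ring_gcd, semiring_gcd_mult_normalize} poly"
  assumes "coprime N D" "coeff D 0 = 1"
  shows "coprime (pCons 0 N) D"
proof -
  obtain E where "D = [:0, 1:] * E + 1"
    using assms(2) by (cases D) (auto simp: one_pCons)
  then have "coprime [:0, 1:] D"
    using gcd_add_mult[of "[:0, 1:]" E 1] by (simp add: coprime_iff_gcd_eq_1 mult.commute)
  then have "coprime ([:0, 1:] * N) D"
    using assms(1) coprime_mult_left_iff by blast
  then show ?thesis by simp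
qed

lemma degree_pCons_0_add:
  fixes N D :: "'a :: comm_ring_1 poly"
  assumes "degree D \<le> degree N" "N \<noteq> 0"
  shows "degree (pCons 0 N + D) = Suc (degree N)"
  using assms by (subst degree_add_eq_left) auto

lemma lead_coeff_pCons_0_add:
  fixes N D :: "'a :: comm_ring_1 poly"
  assumes "degree D \<le> degree N" "N \<noteq> 0"
  shows "lead_coeff (pCons 0 N + D) = lead_coeff N"
  using assms by (simp add: degree_pCons_0_add coeff_eq_0)

lemma Fract_inject_normalized:
  fixes N D N' D' :: "'a :: {ring_gcd, idom_divide, semiring_gcd_mult_normalize}"
  assumes "Fract N D = Fract N' D'" "(N, D) \<in> normalized_fracts" "(N', D') \<in> normalized_fracts"
  shows "N = N' \<and> D = D'"
  using assms quot_of_fract_quot_to_fract'[of "(N, D)"] quot_of_fract_quot_to_fract'[of "(N', D')"]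
  by (simp add: quot_to_fract_def)

lemma to_fract_pCons_0: "to_fract (pCons 0 p) = qvar * to_fract p"
  by (simp add: qvar_def to_fract_def)

lemma Fract_pCons_0_pCons_0: "Fract (pCons 0 N) (pCons 0 D) = Fract N (D :: int poly)"
  using qvar_neq_0 by (simp add: Fract_conv_to_fract to_fract_pCons_0)

lemma qext_T_Fract:
  assumes "D \<noteq> 0"
  shows "qext_T (Some (Fract N D)) = Some (Fract (pCons 0 N + D) D)"
  using assms by (simp add: qext_T_def Fract_conv_to_fract to_fract_pCons_0 field_simps)

lemma qext_S_Fract:
  assumes "N \<noteq> 0" "D \<noteq> 0"
  shows "qext_S (Some (Fract N D)) = Some (Fract (- D) (pCons 0 N))"
  using assms qvar_neq_0 by (simp add: qext_S_def Fract_conv_to_fract to_fract_pCons_0)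

definition reduced_qfrac :: "rat \<Rightarrow> int poly \<Rightarrow> int poly \<Rightarrow> bool" where
  "reduced_qfrac r N D \<longleftrightarrow> qdeform r = Some (Fract N D) \<and> coprime N D
     \<and> lead_coeff N > 0 \<and> lead_coeff D > 0 \<and> coeff D 0 = 1 \<and> degree D \<le> degree N"

lemma reduced_qfrac_qN_qD:
  assumes "reduced_qfrac r N D"
  shows "qN r = N" "qD r = D"
proof -
  have normalized: "(N', D') \<in> normalized_fracts" if "coprime N' D'" "lead_coeff D' > 0" for N' D' :: "int poly"
    using that by (simp add: normalized_fracts_def unit_factor_poly_def)
  have "qND r = (N, D)"
    unfolding qND_def qrat_Some
  proof (rule the_equality)
    fix p
    assume "case p of (N', D') \<Rightarrow> D' \<noteq> 0 \<and> qdeform r = Some (Fract N' D') \<and> coprime N' D'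
              \<and> lead_coeff N' > 0 \<and> lead_coeff D' > 0"
    then obtain N' D' where "p = (N', D')" "Fract N' D' = Fract N D" "coprime N' D'" "lead_coeff D' > 0"
      using assms by (cases p) (auto simp: reduced_qfrac_def)
    then show "p = (N, D)"
      using assms normalized Fract_inject_normalized[of N' D' N D] by (simp add: reduced_qfrac_def)
  qed (use assms in \<open>auto simp: reduced_qfrac_def\<close>)
  then show "qN r = N" "qD r = D" by (simp_all add: qN_def qD_def)
qed

lemma reduced_qfrac_1: "reduced_qfrac 1 1 1"
  using qdeform_plus_1[of 0]
  by (simp add: reduced_qfrac_def qdeform_0 qext_T_def One_fract_def)

lemma reduced_qfrac_plus_1:
  assumes "reduced_qfrac x N D"
  shows "reduced_qfrac (x + 1) (pCons 0 N + D) D"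
proof -
  have D: "coprime N D" "D \<noteq> 0" "N \<noteq> 0" "coeff D 0 = 1" "degree D \<le> degree N"
    using assms by (auto simp: reduced_qfrac_def)
  have "qdeform (x + 1) = Some (Fract (pCons 0 N + D) D)"
    using assms D by (simp add: reduced_qfrac_def qdeform_plus_1 qext_T_Fract)
  moreover have "coprime (pCons 0 N + D) D"
    using coprime_pCons_0_left[OF D(1,4)] by (simp add: coprime_iff_gcd_eq_1)
  moreover have "lead_coeff (pCons 0 N + D) > 0"
    using assms lead_coeff_pCons_0_add[OF D(5,3)] by (simp add: reduced_qfrac_def)
  ultimately show ?thesis
    using assms D by (simp add: reduced_qfrac_def degree_pCons_0_add)
qed

lemma reduced_qfrac_div_plus_1:
  assumes "reduced_qfrac y N D" "y + 1 \<noteq> 0"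
  shows "reduced_qfrac (y / (y + 1)) (pCons 0 N) (pCons 0 N + D)"
proof -
  have D: "coprime N D" "D \<noteq> 0" "N \<noteq> 0" "coeff D 0 = 1" "degree D \<le> degree N"
    using assms by (auto simp: reduced_qfrac_def)
  have "pCons 0 N + D \<noteq> 0"
    using D by (metis add_0 coeff_0 coeff_add coeff_pCons_0 zero_neq_one)
  then have "qdeform (y / (y + 1))
      = Some (Fract (pCons 0 (- D) + pCons 0 (pCons 0 N + D)) (pCons 0 (pCons 0 N + D)))"
    using assms D by (simp add: reduced_qfrac_def qdeform_div_plus_1 qext_T_Fract qext_S_Fract)
  also have "\<dots> = Some (Fract (pCons 0 N) (pCons 0 N + D))"
    by (simp add: Fract_pCons_0_pCons_0)
  finally have "qdeform (y / (y + 1)) = Some (Fract (pCons 0 N) (pCons 0 N + D))" .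
  moreover have "coprime (pCons 0 N) (pCons 0 N + D)"
    using coprime_pCons_0_left[OF D(1,4)] by (simp add: coprime_iff_gcd_eq_1)
  moreover have "lead_coeff (pCons 0 N + D) > 0"
    using assms lead_coeff_pCons_0_add[OF D(5,3)] by (simp add: reduced_qfrac_def)
  ultimately show ?thesis
    using assms D by (simp add: reduced_qfrac_def degree_pCons_0_add)
qed

section \<open>Reciprocity between x and 1/x\<close>

definition mirrored_qfracs :: "rat \<Rightarrow> int poly \<Rightarrow> int poly \<Rightarrow> int poly \<Rightarrow> int poly \<Rightarrow> bool" where
  "mirrored_qfracs x N D N' D' \<longleftrightarrow> reduced_qfrac x N D \<and> reduced_qfrac (1 / x) N' D'
     \<and> N' = reflect_deg (degree N) D \<and> D' = reflect_deg (degree N) N"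

lemma mirrored_qfracs_1: "mirrored_qfracs 1 1 1 1 1"
  using reduced_qfrac_1 by (simp add: mirrored_qfracs_def reflect_deg_def)

lemma mirrored_qfracs_inverse:
  assumes "mirrored_qfracs x N D N' D'"
  shows "mirrored_qfracs (1 / x) N' D' N D"
proof -
  have red: "reduced_qfrac x N D" "reduced_qfrac (1 / x) N' D'"
    and refl: "N' = reflect_deg (degree N) D" "D' = reflect_deg (degree N) N"
    using assms unfolding mirrored_qfracs_def by blast+
  have "degree D \<le> degree N" "coeff D 0 = 1"
    using red(1) by (simp_all add: reduced_qfrac_def)
  then have "degree N' = degree N" "D = reflect_deg (degree N') N'" "N = reflect_deg (degree N') D'"
    using refl by (simp_all add: degree_reflect_deg reflect_deg_reflect_deg)
  then show ?thesis using red by (simp add: mirrored_qfracs_def)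
qed

lemma mirrored_qfracs_plus_1:
  assumes "0 < x" "mirrored_qfracs x N D N' D'"
  shows "mirrored_qfracs (x + 1) (pCons 0 N + D) D (pCons 0 N') (pCons 0 N' + D')"
proof -
  have red: "reduced_qfrac x N D" "reduced_qfrac (1 / x) N' D'"
    and refl: "N' = reflect_deg (degree N) D" "D' = reflect_deg (degree N) N"
    using assms(2) unfolding mirrored_qfracs_def by blast+
  have deg: "degree D \<le> degree N" "N \<noteq> 0"
    using red(1) by (auto simp: reduced_qfrac_def)
  have "(1 / x) / (1 / x + 1) = 1 / (x + 1)" "1 / x + 1 \<noteq> 0"
    using assms(1) by (simp_all add: field_simps)
  then have "reduced_qfrac (1 / (x + 1)) (pCons 0 N') (pCons 0 N' + D')"
    using reduced_qfrac_div_plus_1[OF red(2)] by simp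
  moreover have "pCons 0 N' = reflect_deg (Suc (degree N)) D"
    using deg refl by (simp add: reflect_deg_Suc)
  moreover have "pCons 0 N' + D' = reflect_deg (Suc (degree N)) (pCons 0 N + D)"
    using deg refl by (simp add: reflect_deg_add reflect_deg_Suc reflect_deg_Suc_pCons_0)
  ultimately show ?thesis
    using red(1) deg by (simp add: mirrored_qfracs_def reduced_qfrac_plus_1 degree_pCons_0_add)
qed

lemma mirrored_qfracs_exist:
  assumes "0 < a" "0 < b"
  shows "\<exists>N D N' D'. mirrored_qfracs (of_int a / of_int b) N D N' D'"
  using assms
proof (induction "nat (a + b)" arbitrary: a b rule: less_induct)
  case less
  consider "a = b" | "b < a" | "a < b" by linarith
  then show ?case
  proof cases
    case 1
    then show ?thesis using less.prems mirrored_qfracs_1 by auto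
  next
    case 2
    then obtain N D N' D' where "mirrored_qfracs (of_int (a - b) / of_int b) N D N' D'"
      using less(1)[of "a - b" b] less.prems by auto
    moreover have "of_int (a - b) / of_int b + 1 = (of_int a / of_int b :: rat)"
      using less.prems by (simp add: field_simps)
    ultimately show ?thesis
      using mirrored_qfracs_plus_1 less.prems 2 by (metis of_int_pos divide_pos_pos diff_gt_0_iff_gt)
  next
    case 3
    then obtain N D N' D' where "mirrored_qfracs (of_int (b - a) / of_int a) N D N' D'"
      using less(1)[of "b - a" a] less.prems by auto
    moreover have "1 / (of_int (b - a) / of_int a + 1) = (of_int a / of_int b :: rat)"
      using less.prems by (simp add: field_simps)
    ultimately show ?thesis
      using mirrored_qfracs_plus_1 mirrored_qfracs_inverse less.prems 3
      by (metis of_int_pos divide_pos_pos diff_gt_0_iff_gt)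
  qed
qed

lemma brahmagupta_identity:
  fixes q a b c d :: "'a :: comm_ring_1"
  shows "(q * a * c + b * d)^2 + q * (a * d - b * c)^2 = (q * a^2 + b^2) * (q * c^2 + d^2)"
  by (simp add: power2_eq_square algebra_simps)

theorem theorem2:
  fixes m n :: int
  assumes "1 \<le> n" and "n < m" and "coprime m n"
  defines "q \<equiv> [:0, 1:] :: int poly"
      and "x \<equiv> of_int m / of_int n :: rat"
      and "y \<equiv> of_int n / of_int m :: rat"
  defines "A \<equiv> q * qN x * qN y + qD x * qD y"
      and "B \<equiv> qN x * qD y - qD x * qN y"
      and "C \<equiv> q * (qN x)^2 + (qD x)^2"
  shows "A^2 + q * B^2 = C * reflect_poly C"
proof -
  obtain N D N' D' where mirrored: "mirrored_qfracs x N D N' D'"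
    using mirrored_qfracs_exist[of m n] assms(1,2) unfolding x_def by auto
  have "y = 1 / x"
    by (simp add: x_def y_def)
  then have red: "reduced_qfrac x N D" "reduced_qfrac y N' D'"
    and refl: "N' = reflect_deg (degree N) D" "D' = reflect_deg (degree N) N"
    using mirrored unfolding mirrored_qfracs_def by blast+
  have N: "N \<noteq> 0" "degree D \<le> degree N"
    using red(1) by (auto simp: reduced_qfrac_def)
  have "A^2 + q * B^2 = C * (q * N'^2 + D'^2)"
    unfolding A_def B_def C_def
    using brahmagupta_identity reduced_qfrac_qN_qD[OF red(1)] reduced_qfrac_qN_qD[OF red(2)] by metis
  also have "q * N'^2 + D'^2 = reflect_poly C"
    unfolding C_def q_def using reflect_poly_sum_squares[OF N] refl reduced_qfrac_qN_qD[OF red(1)] by simp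
  finally show ?thesis .
qed

end
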